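(* Let $p\in(0,1)$ be a constant, $G_n\sim G(n,p)$ on vertex set $[n]$, and fix an integer $v\geq 3$. Let $X=\left[\left\lfloor\frac{6}{p^2}\ln n\right\rfloor\right]$. Then with probability tending to $1$ as $n\to\infty$, for every two distinct vertices $x_1,x_2\in[n]$, the common neighbourhood $N_X(x_1,x_2)$ of $x_1,x_2$ inside $X$ contains a clique of size $v$.
   Context: $G(n,p)$ is the binomial random graph on $[n]=\{1,\ldots,n\}$. *)

theory Defs
  imports "HOL-Probability.Probability"
begin

definition edge_pairs :: "nat \<Rightarrow> (nat \<times> nat) set" where
  "edge_pairs n = {(i, j). 1 \<le> i \<and> i < j \<and> j \<le> n}"

text \<open>The binomial random graph G(n,p): each potential edge is present independently
  with probability p. A graph is its edge-indicator function on pairs (i,j), i<j.\<close>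
definition Gnp :: "nat \<Rightarrow> real \<Rightarrow> (nat \<times> nat \<Rightarrow> bool) pmf" where
  "Gnp n p = Pi_pmf (edge_pairs n) False (\<lambda>_. bernoulli_pmf p)"

definition adj :: "(nat \<times> nat \<Rightarrow> bool) \<Rightarrow> nat \<Rightarrow> nat \<Rightarrow> bool" where
  "adj G x y \<longleftrightarrow> (x < y \<and> G (x, y)) \<or> (y < x \<and> G (y, x))"

definition common_nbhd :: "(nat \<times> nat \<Rightarrow> bool) \<Rightarrow> nat set \<Rightarrow> nat \<Rightarrow> nat \<Rightarrow> nat set" where
  "common_nbhd G X x1 x2 = {y \<in> X. adj G x1 y \<and> adj G x2 y}"

definition is_clique :: "(nat \<times> nat \<Rightarrow> bool) \<Rightarrow> nat set \<Rightarrow> bool" where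
  "is_clique G K \<longleftrightarrow> (\<forall>a\<in>K. \<forall>b\<in>K. a \<noteq> b \<longrightarrow> adj G a b)"

end

(*
  Put k = floor(ln n / 2). By induction on v, for every C a fixed vertex set S with |S| = k
  spans no v-clique with probability at most exp(-C k) once k is large. Split S into halves
  S0 and S1. Either every vertex of S0 has fewer than s ~ eps k neighbours in S1, which forces
  fewer than |S0| s edges between the halves and has probability exp(-Omega(k^2)), or an s-set
  R of neighbours in S1 of some u in S0 is chosen by looking at the S0-S1 edges only. The
  edges inside R are independent of that choice, so R contains a v-clique except with
  probability exp(-C' s), and u extends it to a (v+1)-clique.

  The same conditioning handles a pair x1, x2. Their common neighbourhood in X has fewer than
  k elements with probability at most 2^k (1 - p^2/2)^(|X| - 2) = O(n^(-5/2)); otherwise a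
  k-subset chosen from the edges at x1 and x2 contains a v-clique except with probability
  exp(-6k) = O(n^(-3)). A union bound over the n^2 pairs finishes the proof.
*)
theory Submission
  imports Defs "HOL-Real_Asymp.Real_Asymp"
begin

section \<open>Conditioning in finite product distributions\<close>

lemma prob_pair_pmf_le_expectation:
  fixes \<psi> :: "'a \<Rightarrow> real"
  assumes bound: "\<And>a. measure_pmf.prob B (F a) \<le> \<psi> a"
    and int: "integrable (measure_pmf A) \<psi>"
  shows "measure_pmf.prob (pair_pmf A B) {z. snd z \<in> F (fst z)} \<le> measure_pmf.expectation A \<psi>"
proof -
  have nonneg: "0 \<le> \<psi> a" for a
    using bound[of a] measure_nonneg[of B "F a"] by linarith
  have "emeasure (pair_pmf A B) {z. snd z \<in> F (fst z)} = (\<integral>\<^sup>+a. emeasure B (F a) \<partial>A)"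
    unfolding pair_pmf_def by (simp add: vimage_def nn_integral_indicator[symmetric] indicator_def)
  also have "\<dots> \<le> (\<integral>\<^sup>+a. ennreal (\<psi> a) \<partial>A)"
    by (intro nn_integral_mono) (simp add: measure_pmf.emeasure_eq_measure ennreal_leI bound)
  also have "\<dots> = ennreal (measure_pmf.expectation A \<psi>)"
    using int nonneg by (intro nn_integral_eq_integral) auto
  finally show ?thesis
    using nonneg by (simp add: measure_pmf.emeasure_eq_measure Bochner_Integration.integral_nonneg)
qed

lemma prob_Pi_pmf_le_expectation:
  fixes \<phi> :: "('i \<Rightarrow> 'v) \<Rightarrow> 'r" and \<psi> :: "'r \<Rightarrow> real"
  assumes fin: "finite I" and AI: "A \<subseteq> I" and finQ: "\<And>i. finite (set_pmf (Q i))"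
    and \<phi>: "\<And>x y. (\<And>i. i \<in> A \<Longrightarrow> x i = y i) \<Longrightarrow> \<phi> x = \<phi> y"
    and F: "\<And>r x y. (\<And>i. i \<in> I - A \<Longrightarrow> x i = y i) \<Longrightarrow> x \<in> F r \<longleftrightarrow> y \<in> F r"
    and bound: "\<And>r. measure_pmf.prob (Pi_pmf I d Q) (F r) \<le> \<psi> r"
  shows "measure_pmf.prob (Pi_pmf I d Q) {x. x \<in> F (\<phi> x)}
           \<le> measure_pmf.expectation (Pi_pmf I d Q) (\<lambda>x. \<psi> (\<phi> x))"
proof -
  define h :: "('i \<Rightarrow> 'v) \<times> ('i \<Rightarrow> 'v) \<Rightarrow> 'i \<Rightarrow> 'v"
    where "h = (\<lambda>(f, g) i. if i \<in> A then f i else g i)"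
  define PA PB where "PA = Pi_pmf A d Q" and "PB = Pi_pmf (I - A) d Q"
  have "Pi_pmf (A \<union> (I - A)) d Q = map_pmf h (pair_pmf PA PB)"
    unfolding h_def PA_def PB_def using fin AI by (intro Pi_pmf_union) (auto intro: finite_subset)
  then have split: "Pi_pmf I d Q = map_pmf h (pair_pmf PA PB)"
    using AI by (simp add: Un_absorb1)
  have \<phi>h: "\<phi> (h z) = \<phi> (fst z)" for z
    by (cases z) (auto simp: h_def intro: \<phi>)
  have Fh: "h z \<in> F r \<longleftrightarrow> snd z \<in> F r" for z r
    by (rule F) (simp add: h_def split: prod.splits)
  have "measure_pmf.prob PB (F r) \<le> \<psi> r" for r
  proof -
    have "measure_pmf.prob (Pi_pmf I d Q) (F r) = measure_pmf.prob (pair_pmf PA PB) (snd -` F r)"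
      by (simp add: split measure_map_pmf vimage_def Fh)
    also have "\<dots> = measure_pmf.prob PB (F r)"
      by (simp add: map_snd_pair_pmf flip: measure_map_pmf)
    finally show ?thesis using bound[of r] by linarith
  qed
  moreover have "finite (set_pmf PA)"
    unfolding PA_def using fin AI finQ
    by (intro finite_subset[OF set_Pi_pmf_subset'] finite_PiE_dflt) (auto intro: finite_subset)
  ultimately have "measure_pmf.prob (pair_pmf PA PB) {z. snd z \<in> F (\<phi> (fst z))}
      \<le> measure_pmf.expectation PA (\<lambda>a. \<psi> (\<phi> a))"
    by (intro prob_pair_pmf_le_expectation integrable_measure_pmf_finite)
  moreover have "measure_pmf.expectation (Pi_pmf I d Q) (\<lambda>x. \<psi> (\<phi> x))
      = measure_pmf.expectation PA (\<lambda>a. \<psi> (\<phi> a))"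
    using expectation_pair_pmf_fst[of PA PB "\<lambda>a. \<psi> (\<phi> a)"] by (simp add: split \<phi>h)
  ultimately show ?thesis
    by (simp add: split vimage_def Fh \<phi>h)
qed

lemma prob_le_expectation:
  fixes f :: "'a \<Rightarrow> real"
  assumes "finite (set_pmf M)" and "\<And>x. x \<in> set_pmf M \<Longrightarrow> indicator S x \<le> f x"
  shows "measure_pmf.prob M S \<le> measure_pmf.expectation M f"
proof -
  have "measure_pmf.prob M S = measure_pmf.expectation M (indicator S)"
    by simp
  also have "\<dots> \<le> measure_pmf.expectation M f"
    by (intro integral_mono_AE integrable_measure_pmf_finite assms AE_pmfI)
  finally show ?thesis .
qed

lemma finite_set_Pi_pmf_bernoulli:
  "finite I \<Longrightarrow> finite (set_pmf (Pi_pmf I False (\<lambda>_. bernoulli_pmf p)))"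
  by (rule finite_subset[OF set_Pi_pmf_subset']) auto

lemma expectation_power_card_Pi_bernoulli:
  fixes q :: real
  assumes fin: "finite I" and DI: "D \<subseteq> I" and p: "0 \<le> p" "p \<le> 1" and q: "0 \<le> q"
  shows "measure_pmf.expectation (Pi_pmf I False (\<lambda>_. bernoulli_pmf p)) (\<lambda>x. q ^ card {i \<in> D. x i})
           = (1 - p + p * q) ^ card D"
proof -
  define f where "f i b = (if i \<in> D \<and> b then q else 1)" for i b
  have "q ^ card {i \<in> D. x i} = (\<Prod>i\<in>I. f i (x i))" for x
  proof -
    have "{i \<in> I. i \<in> D \<and> x i} = {i \<in> D. x i}" using DI by blast
    then show ?thesis using fin by (simp add: f_def prod.If_cases Int_def)
  qed
  then have "measure_pmf.expectation (Pi_pmf I False (\<lambda>_. bernoulli_pmf p)) (\<lambda>x. q ^ card {i \<in> D. x i})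
      = measure_pmf.expectation (Pi_pmf I False (\<lambda>_. bernoulli_pmf p)) (\<lambda>x. \<Prod>i\<in>I. f i (x i))"
    by simp
  also have "\<dots> = (\<Prod>i\<in>I. measure_pmf.expectation (bernoulli_pmf p) (f i))"
    using fin q by (intro expectation_prod_Pi_pmf integrable_measure_pmf_finite) (auto simp: f_def)
  also have "\<dots> = (\<Prod>i\<in>I. if i \<in> D then 1 - p + p * q else 1)"
    using p by (intro prod.cong) (auto simp: f_def algebra_simps)
  also have "\<dots> = (1 - p + p * q) ^ card D"
    using fin DI by (simp add: prod.If_cases Int_absorb1)
  finally show ?thesis .
qed

lemma prob_card_less_Pi_bernoulli_le:
  assumes fin: "finite I" and DI: "D \<subseteq> I" and p: "0 \<le> p" "p \<le> 1"
  shows "measure_pmf.prob (Pi_pmf I False (\<lambda>_. bernoulli_pmf p)) {x. card {i \<in> D. x i} < t}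
           \<le> 2 ^ t * (1 - p / 2) ^ card D"
proof -
  let ?M = "Pi_pmf I False (\<lambda>_. bernoulli_pmf p)"
  have "measure_pmf.prob ?M {x. card {i \<in> D. x i} < t}
      \<le> measure_pmf.expectation ?M (\<lambda>x. 2 ^ t * (1 / 2) ^ card {i \<in> D. x i})"
  proof (intro prob_le_expectation finite_set_Pi_pmf_bernoulli fin)
    fix x
    have "1 \<le> (2::real) ^ t * (1 / 2) ^ card {i \<in> D. x i}" if "card {i \<in> D. x i} < t"
      using that by (simp add: field_simps power_increasing)
    then show "indicator {x. card {i \<in> D. x i} < t} x \<le> (2::real) ^ t * (1 / 2) ^ card {i \<in> D. x i}"
      by (simp add: indicator_def)
  qed
  also have "\<dots> = 2 ^ t * (1 - p / 2) ^ card D"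
    using expectation_power_card_Pi_bernoulli[OF fin DI p, of "1/2"] by simp
  finally show ?thesis .
qed

section \<open>Edges and cliques\<close>

definition edge :: "nat \<Rightarrow> nat \<Rightarrow> nat \<times> nat" where
  "edge x y = (min x y, max x y)"

definition edges_between :: "nat set \<Rightarrow> nat set \<Rightarrow> (nat \<times> nat) set" where
  "edges_between A B = (\<lambda>(a, b). edge a b) ` (A \<times> B)"

definition has_clique :: "(nat \<times> nat \<Rightarrow> bool) \<Rightarrow> nat set \<Rightarrow> nat \<Rightarrow> bool" where
  "has_clique G R v \<longleftrightarrow> (\<exists>K\<subseteq>R. card K = v \<and> is_clique G K)"

lemma adj_iff_edge: "adj G x y \<longleftrightarrow> x \<noteq> y \<and> G (edge x y)"
  unfolding adj_def edge_def by (cases x y rule: linorder_cases) auto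

lemma adj_commute: "adj G x y = adj G y x"
  unfolding adj_def by auto

lemma edge_eq_edge_iff: "edge a b = edge c d \<longleftrightarrow> (a = c \<and> b = d) \<or> (a = d \<and> b = c)"
  unfolding edge_def by (auto simp: min_def max_def)

lemma edge_in_edge_pairs: "x \<in> {1..n} \<Longrightarrow> y \<in> {1..n} \<Longrightarrow> x \<noteq> y \<Longrightarrow> edge x y \<in> edge_pairs n"
  unfolding edge_def edge_pairs_def by (cases x y rule: linorder_cases) auto

lemma finite_edge_pairs: "finite (edge_pairs n)"
  by (rule finite_subset[of _ "{1..n} \<times> {1..n}"]) (auto simp: edge_pairs_def)

lemma edges_between_subset_edge_pairs:
  "A \<subseteq> {1..n} \<Longrightarrow> B \<subseteq> {1..n} \<Longrightarrow> A \<inter> B = {} \<Longrightarrow> edges_between A B \<subseteq> edge_pairs n"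
  unfolding edges_between_def image_subset_iff by (auto intro!: edge_in_edge_pairs)

lemma edge_in_edges_between: "a \<in> A \<Longrightarrow> b \<in> B \<Longrightarrow> edge a b \<in> edges_between A B"
  unfolding edges_between_def by force

lemma edge_notin_edges_between: "a \<notin> A \<Longrightarrow> b \<notin> A \<Longrightarrow> edge a b \<notin> edges_between A B"
  unfolding edges_between_def by (auto simp: edge_eq_edge_iff)

lemma inj_on_edges_between: "A \<inter> B = {} \<Longrightarrow> inj_on (\<lambda>(a, b). edge a b) (A \<times> B)"
  by (auto simp: inj_on_def edge_eq_edge_iff)

lemma card_edges_between: "A \<inter> B = {} \<Longrightarrow> card (edges_between A B) = card A * card B"
  unfolding edges_between_def by (simp add: card_image inj_on_edges_between card_cartesian_product)

lemma card_edges_between_present: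
  assumes "finite A" "finite B" "A \<inter> B = {}"
  shows "card {e \<in> edges_between A B. G e} = (\<Sum>a\<in>A. card {b \<in> B. adj G a b})"
proof -
  have "{e \<in> edges_between A B. G e} = (\<lambda>(a, b). edge a b) ` (SIGMA a:A. {b \<in> B. adj G a b})"
    using assms(3) by (auto simp: edges_between_def adj_iff_edge) (force intro: rev_image_eqI)
  then have "card {e \<in> edges_between A B. G e} = card (SIGMA a:A. {b \<in> B. adj G a b})"
    using inj_on_edges_between[OF assms(3)] by (simp add: card_image inj_on_subset[of _ "A \<times> B"] Sigma_mono)
  then show ?thesis
    using assms by simp
qed

lemma has_clique_0: "has_clique G R 0"
  unfolding has_clique_def is_clique_def by (intro exI[of _ "{}"]) simp

lemma has_clique_mono: "has_clique G R v \<Longrightarrow> R \<subseteq> R' \<Longrightarrow> has_clique G R' v"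
  unfolding has_clique_def by blast

lemma has_clique_insert:
  assumes "finite R" "u \<notin> R" "\<And>w. w \<in> R \<Longrightarrow> adj G u w" "has_clique G R v"
  shows "has_clique G (insert u R) (Suc v)"
proof -
  obtain K where K: "K \<subseteq> R" "card K = v" "is_clique G K"
    using assms(4) unfolding has_clique_def by blast
  have "is_clique G (insert u K)"
    using K assms(3) unfolding is_clique_def by (auto simp: adj_commute)
  moreover have "u \<notin> K"
    using K(1) assms(2) by blast
  then have "card (insert u K) = Suc v"
    using K(2) finite_subset[OF K(1) assms(1)] by simp
  ultimately show ?thesis
    using K(1) unfolding has_clique_def by blast
qed

lemma has_clique_Suc_if_neighbours:
  assumes "finite S" "u \<in> S" "R \<subseteq> S - {u}" "\<And>w. w \<in> R \<Longrightarrow> adj G u w" "has_clique G R v"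
  shows "has_clique G S (Suc v)"
proof -
  have "finite R"
    using assms(3) finite_Diff[OF assms(1)] by (rule finite_subset)
  then have "has_clique G (insert u R) (Suc v)"
    using assms(3-5) by (intro has_clique_insert) auto
  then show ?thesis
    by (rule has_clique_mono) (use assms(2,3) in auto)
qed

lemma has_clique_cong:
  assumes "\<And>a b. a \<in> R \<Longrightarrow> b \<in> R \<Longrightarrow> a \<noteq> b \<Longrightarrow> G (edge a b) = G' (edge a b)"
  shows "has_clique G R v \<longleftrightarrow> has_clique G' R v"
proof -
  have "is_clique G K \<longleftrightarrow> is_clique G' K" if "K \<subseteq> R" for K
    using that assms unfolding is_clique_def by (auto simp: adj_iff_edge subset_iff)
  then show ?thesis
    unfolding has_clique_def by blast
qed

section \<open>Cliques in sets of logarithmic size\<close>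

lemma prob_few_edges_between_le:
  assumes p: "0 \<le> p" "p \<le> 1" and AB: "A \<subseteq> {1..n}" "B \<subseteq> {1..n}" "A \<inter> B = {}"
  shows "measure_pmf.prob (Gnp n p) {G. (\<Sum>a\<in>A. card {b \<in> B. adj G a b}) < t}
           \<le> 2 ^ t * (1 - p / 2) ^ (card A * card B)"
proof -
  have "finite A" "finite B"
    using AB(1,2) by (auto intro: finite_subset)
  then have "{G. (\<Sum>a\<in>A. card {b \<in> B. adj G a b}) < t} = {G. card {e \<in> edges_between A B. G e} < t}"
    using AB(3) by (simp add: card_edges_between_present)
  moreover have "edges_between A B \<subseteq> edge_pairs n"
    using AB by (rule edges_between_subset_edge_pairs)
  then have "measure_pmf.prob (Gnp n p) {G. card {e \<in> edges_between A B. G e} < t}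
      \<le> 2 ^ t * (1 - p / 2) ^ card (edges_between A B)"
    unfolding Gnp_def by (rule prob_card_less_Pi_bernoulli_le[OF finite_edge_pairs _ p])
  ultimately show ?thesis
    using card_edges_between[OF AB(3)] by simp
qed

lemma prob_no_clique_in_selected_set_le:
  fixes \<phi> :: "(nat \<times> nat \<Rightarrow> bool) \<Rightarrow> nat set"
  assumes A: "A \<subseteq> {1..n}" and B: "B \<subseteq> {1..n}" and AB: "A \<inter> B = {}"
    and \<phi>: "\<And>G G'. (\<And>e. e \<in> edges_between A B \<Longrightarrow> G e = G' e) \<Longrightarrow> \<phi> G = \<phi> G'"
    and no_clique: "\<And>R. R \<subseteq> {1..n} \<Longrightarrow> card R = s \<Longrightarrow>
                      measure_pmf.prob (Gnp n p) {G. \<not> has_clique G R v} \<le> \<beta>"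
    and "0 \<le> \<beta>"
  shows "measure_pmf.prob (Gnp n p) {G. \<phi> G \<subseteq> B \<and> card (\<phi> G) = s \<and> \<not> has_clique G (\<phi> G) v} \<le> \<beta>"
proof -
  define F where "F R = {G. R \<subseteq> B \<and> card R = s \<and> \<not> has_clique G R v}" for R
  have "measure_pmf.prob (Gnp n p) {G. G \<in> F (\<phi> G)} \<le> measure_pmf.expectation (Gnp n p) (\<lambda>G. \<beta>)"
    unfolding Gnp_def
  proof (rule prob_Pi_pmf_le_expectation[where \<phi> = \<phi> and F = F and \<psi> = "\<lambda>_. \<beta>",
        OF finite_edge_pairs edges_between_subset_edge_pairs[OF A B AB]])
    fix R and G G' :: "nat \<times> nat \<Rightarrow> bool"
    assume same: "\<And>e. e \<in> edge_pairs n - edges_between A B \<Longrightarrow> G e = G' e"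
    have "has_clique G R v \<longleftrightarrow> has_clique G' R v" if "R \<subseteq> B"
    proof (rule has_clique_cong)
      fix a b assume "a \<in> R" "b \<in> R" "a \<noteq> b"
      then show "G (edge a b) = G' (edge a b)"
        using that B AB by (intro same DiffI edge_in_edge_pairs edge_notin_edges_between) auto
    qed
    then show "G \<in> F R \<longleftrightarrow> G' \<in> F R"
      unfolding F_def by blast
  next
    fix R
    show "measure_pmf.prob (Pi_pmf (edge_pairs n) False (\<lambda>_. bernoulli_pmf p)) (F R) \<le> \<beta>"
    proof (cases "R \<subseteq> B \<and> card R = s")
      case True
      then have "measure_pmf.prob (Gnp n p) (F R) \<le> measure_pmf.prob (Gnp n p) {G. \<not> has_clique G R v}"
        by (intro measure_pmf.finite_measure_mono) (auto simp: F_def)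
      also have "\<dots> \<le> \<beta>"
        using True B by (intro no_clique) auto
      finally show ?thesis by (simp add: Gnp_def)
    next
      case False
      then have "F R = {}" by (auto simp: F_def)
      with \<open>0 \<le> \<beta>\<close> show ?thesis by simp
    qed
  qed (fact \<phi> | simp)+
  then show ?thesis
    by (simp add: F_def)
qed

lemma prob_large_set_without_clique_le:
  fixes N :: "(nat \<times> nat \<Rightarrow> bool) \<Rightarrow> nat set"
  assumes A: "A \<subseteq> {1..n}" and B: "B \<subseteq> {1..n}" and AB: "A \<inter> B = {}" and N_sub: "\<And>G. N G \<subseteq> B"
    and N: "\<And>G G'. (\<And>e. e \<in> edges_between A B \<Longrightarrow> G e = G' e) \<Longrightarrow> N G = N G'"
    and no_clique: "\<And>R. R \<subseteq> {1..n} \<Longrightarrow> card R = s \<Longrightarrow>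
                      measure_pmf.prob (Gnp n p) {G. \<not> has_clique G R v} \<le> \<beta>"
    and "0 \<le> \<beta>"
  shows "measure_pmf.prob (Gnp n p) {G. s \<le> card (N G) \<and> \<not> has_clique G (N G) v} \<le> \<beta>"
proof -
  define \<phi> where "\<phi> G = (SOME R. R \<subseteq> N G \<and> card R = s)" for G
  have "{G. s \<le> card (N G) \<and> \<not> has_clique G (N G) v}
      \<subseteq> {G. \<phi> G \<subseteq> B \<and> card (\<phi> G) = s \<and> \<not> has_clique G (\<phi> G) v}"
  proof (intro subsetI CollectI, elim CollectE conjE)
    fix G assume "s \<le> card (N G)" "\<not> has_clique G (N G) v"
    moreover obtain R where "R \<subseteq> N G" "card R = s"
      using obtain_subset_with_card_n[OF \<open>s \<le> card (N G)\<close>] by metis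
    then have "\<phi> G \<subseteq> N G \<and> card (\<phi> G) = s"
      unfolding \<phi>_def by (intro someI[where P = "\<lambda>R. R \<subseteq> N G \<and> card R = s"]) blast
    ultimately show "\<phi> G \<subseteq> B \<and> card (\<phi> G) = s \<and> \<not> has_clique G (\<phi> G) v"
      using N_sub[of G] has_clique_mono[of G "\<phi> G" v "N G"] by blast
  qed
  then have "measure_pmf.prob (Gnp n p) {G. s \<le> card (N G) \<and> \<not> has_clique G (N G) v}
      \<le> measure_pmf.prob (Gnp n p) {G. \<phi> G \<subseteq> B \<and> card (\<phi> G) = s \<and> \<not> has_clique G (\<phi> G) v}"
    by (rule measure_pmf.finite_measure_mono) simp
  also have "\<dots> \<le> \<beta>"
  proof (rule prob_no_clique_in_selected_set_le[OF A B AB _ no_clique \<open>0 \<le> \<beta>\<close>])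
    fix G G' :: "nat \<times> nat \<Rightarrow> bool"
    assume "\<And>e. e \<in> edges_between A B \<Longrightarrow> G e = G' e"
    then have "N G = N G'"
      by (rule N)
    then show "\<phi> G = \<phi> G'"
      by (simp add: \<phi>_def)
  qed
  finally show ?thesis .
qed

lemma prob_no_clique_Suc_le:
  assumes p: "0 \<le> p" "p \<le> 1" and S: "S \<subseteq> {1..n}" and S0: "S0 \<subseteq> S" "S0 \<noteq> {}"
    and no_clique: "\<And>R. R \<subseteq> {1..n} \<Longrightarrow> card R = s \<Longrightarrow>
                      measure_pmf.prob (Gnp n p) {G. \<not> has_clique G R v} \<le> \<beta>"
    and "0 \<le> \<beta>"
  shows "measure_pmf.prob (Gnp n p) {G. \<not> has_clique G S (Suc v)}
           \<le> 2 ^ (card S0 * s) * (1 - p / 2) ^ (card S0 * card (S - S0)) + \<beta>"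
proof -
  define S1 where "S1 = S - S0"
  define N where "N G a = {b \<in> S1. adj G a b}" for G a
  define \<phi> where "\<phi> G = (SOME R. \<exists>a\<in>S0. R \<subseteq> N G a \<and> card R = s)" for G
  define Few where "Few = {G. (\<Sum>a\<in>S0. card (N G a)) < card S0 * s}"
  define Sel where "Sel = {G. \<phi> G \<subseteq> S1 \<and> card (\<phi> G) = s \<and> \<not> has_clique G (\<phi> G) v}"
  have "finite S" "S0 \<inter> S1 = {}"
    using S by (auto simp: S1_def intro: finite_subset)
  have "{G. \<not> has_clique G S (Suc v)} \<subseteq> Few \<union> Sel"
  proof (intro subsetI, elim CollectE)
    fix G assume no_Suc: "\<not> has_clique G S (Suc v)"
    show "G \<in> Few \<union> Sel"
    proof (cases "\<forall>a\<in>S0. card (N G a) < s")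
      case True
      then have "(\<Sum>a\<in>S0. card (N G a)) < (\<Sum>a\<in>S0. s)"
        using S0 finite_subset[OF S0(1) \<open>finite S\<close>] by (intro sum_strict_mono) auto
      then show ?thesis
        by (simp add: Few_def)
    next
      case False
      then obtain a R where "a \<in> S0" "R \<subseteq> N G a" "card R = s"
        using obtain_subset_with_card_n by (metis not_less)
      then have "\<exists>a\<in>S0. \<phi> G \<subseteq> N G a \<and> card (\<phi> G) = s"
        unfolding \<phi>_def by (intro someI[where P = "\<lambda>R. \<exists>a\<in>S0. R \<subseteq> N G a \<and> card R = s"]) blast
      then obtain a where a: "a \<in> S0" "\<phi> G \<subseteq> N G a" "card (\<phi> G) = s"
        by blast
      then have "a \<in> S" "\<phi> G \<subseteq> S - {a}" "\<And>w. w \<in> \<phi> G \<Longrightarrow> adj G a w"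
        using S0(1) by (auto simp: N_def S1_def)
      then have "\<not> has_clique G (\<phi> G) v"
        using has_clique_Suc_if_neighbours[OF \<open>finite S\<close>] no_Suc by blast
      with a show ?thesis
        by (auto simp: Sel_def N_def)
    qed
  qed
  then have "measure_pmf.prob (Gnp n p) {G. \<not> has_clique G S (Suc v)}
      \<le> measure_pmf.prob (Gnp n p) (Few \<union> Sel)"
    by (rule measure_pmf.finite_measure_mono) simp
  also have "\<dots> \<le> measure_pmf.prob (Gnp n p) Few + measure_pmf.prob (Gnp n p) Sel"
    by (rule measure_Un_le) simp_all
  also have "\<dots> \<le> 2 ^ (card S0 * s) * (1 - p / 2) ^ (card S0 * card S1) + \<beta>"
  proof (rule add_mono)
    show "measure_pmf.prob (Gnp n p) Few \<le> 2 ^ (card S0 * s) * (1 - p / 2) ^ (card S0 * card S1)"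
      unfolding Few_def N_def using S S0 \<open>S0 \<inter> S1 = {}\<close>
      by (intro prob_few_edges_between_le[OF p]) (auto simp: S1_def)
    show "measure_pmf.prob (Gnp n p) Sel \<le> \<beta>"
      unfolding Sel_def
    proof (rule prob_no_clique_in_selected_set_le[OF _ _ \<open>S0 \<inter> S1 = {}\<close> _ no_clique \<open>0 \<le> \<beta>\<close>])
      fix G G' :: "nat \<times> nat \<Rightarrow> bool"
      assume same: "\<And>e. e \<in> edges_between S0 S1 \<Longrightarrow> G e = G' e"
      have "N G a = N G' a" if "a \<in> S0" for a
        using that by (auto simp: N_def adj_iff_edge same edge_in_edges_between)
      then have "(\<lambda>R. \<exists>a\<in>S0. R \<subseteq> N G a \<and> card R = s) = (\<lambda>R. \<exists>a\<in>S0. R \<subseteq> N G' a \<and> card R = s)"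
        by (intro ext bex_cong) auto
      then show "\<phi> G = \<phi> G'"
        unfolding \<phi>_def by simp
    qed (use S S0 in \<open>auto simp: S1_def\<close>)
  qed
  finally show ?thesis
    unfolding S1_def .
qed

lemma two_power_mult_exp_le:
  fixes c :: real and a b s :: nat
  assumes "real s * ln 2 \<le> c * real b / 2"
  shows "2 ^ (a * s) * exp (- c) ^ (a * b) \<le> exp (- c * real a * real b / 2)"
proof -
  have "(2::real) ^ (a * s) = exp (real (a * s) * ln 2)"
    by (subst exp_of_nat_mult) simp
  moreover have "exp (- c) ^ (a * b) = exp (real (a * b) * (- c))"
    by (subst exp_of_nat_mult) simp
  ultimately have "2 ^ (a * s) * exp (- c) ^ (a * b) = exp (real a * (real s * ln 2 - c * real b))"
    by (simp add: exp_add[symmetric] algebra_simps)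
  also have "\<dots> \<le> exp (- c * real a * real b / 2)"
    using mult_left_mono[OF assms, of "real a"] by (simp add: algebra_simps)
  finally show ?thesis .
qed

lemma prob_no_clique_Suc_le_exp:
  assumes p: "0 < p" "p \<le> 1" and S: "S \<subseteq> {1..n}" "card S = k" and "2 \<le> k"
    and c: "c = - ln (1 - p / 2)" and s: "s = nat \<lfloor>c / (2 * ln 2) * real (k - k div 2)\<rfloor>"
    and no_clique: "\<And>R. R \<subseteq> {1..n} \<Longrightarrow> card R = s \<Longrightarrow>
                      measure_pmf.prob (Gnp n p) {G. \<not> has_clique G R v} \<le> \<beta>"
    and "0 \<le> \<beta>"
  shows "measure_pmf.prob (Gnp n p) {G. \<not> has_clique G S (Suc v)}
           \<le> exp (- c * (real k - 1) * real k / 8) + \<beta>"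
proof -
  define a b where "a = k div 2" and "b = k - k div 2"
  have "a \<le> card S"
    using S(2) by (simp add: a_def)
  then obtain S0 where S0: "S0 \<subseteq> S" "card S0 = a"
    by (metis obtain_subset_with_card_n)
  have "finite S"
    using S(1) by (rule finite_subset) simp
  then have "card (S - S0) = b"
    using S0 S(2) by (simp add: card_Diff_subset finite_subset a_def b_def)
  have "S0 \<noteq> {}"
    using S0(2) \<open>2 \<le> k\<close> by (auto simp: a_def)
  have "0 < c" "exp (- c) = 1 - p / 2"
    using p by (simp_all add: c ln_less_zero)
  then have "real s \<le> c / (2 * ln 2) * real b"
    unfolding s b_def by simp
  then have "real s * ln 2 \<le> c * real b / 2"
    by (simp add: field_simps)
  have "measure_pmf.prob (Gnp n p) {G. \<not> has_clique G S (Suc v)}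
      \<le> 2 ^ (a * s) * exp (- c) ^ (a * b) + \<beta>"
    using prob_no_clique_Suc_le[OF _ _ S(1) S0(1) \<open>S0 \<noteq> {}\<close> no_clique \<open>0 \<le> \<beta>\<close>] p
      \<open>card (S - S0) = b\<close> S0(2) \<open>exp (- c) = 1 - p / 2\<close> by simp
  also have "2 ^ (a * s) * exp (- c) ^ (a * b) \<le> exp (- c * real a * real b / 2)"
    by (rule two_power_mult_exp_le) fact
  also have "\<dots> \<le> exp (- c * (real k - 1) * real k / 8)"
  proof -
    have "(real k - 1) / 2 * (real k / 2) \<le> real a * real b"
      using \<open>2 \<le> k\<close> by (intro mult_mono) (auto simp: a_def b_def)
    then have "c * ((real k - 1) / 2 * (real k / 2)) \<le> c * (real a * real b)"
      using \<open>0 < c\<close> by (intro mult_left_mono) auto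
    then have "- c * real a * real b / 2 \<le> - c * (real k - 1) * real k / 8"
      by (simp add: algebra_simps)
    then show ?thesis
      by simp
  qed
  finally show ?thesis
    by simp
qed

lemma eventually_prob_no_clique_le:
  assumes p: "0 < p" "p \<le> 1" and "0 < C"
  shows "\<forall>\<^sub>F k in sequentially. \<forall>n S. S \<subseteq> {1..n} \<longrightarrow> card S = k \<longrightarrow>
           measure_pmf.prob (Gnp n p) {G. \<not> has_clique G S v} \<le> exp (- C * real k)"
  using \<open>0 < C\<close>
proof (induction v arbitrary: C)
  case 0
  then show ?case
    by (simp add: has_clique_0)
next
  case (Suc v)
  \<comment> \<open>\<open>\<epsilon>\<close> keeps \<open>2 ^ s\<close> below \<open>(1 - p / 2) ^ (- b / 2)\<close> for \<open>s \<le> \<epsilon> b\<close>, where \<open>b = k - k div 2\<close>;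
     \<open>C'\<close> turns \<open>s \<ge> \<epsilon> k / 2 - 1\<close> into \<open>C' s \<ge> 2 C k - C'\<close>\<close>
  define c where "c = - ln (1 - p / 2)"
  define \<epsilon> where "\<epsilon> = c / (2 * ln 2)"
  define C' where "C' = 4 * C / \<epsilon>"
  have "0 < c"
    using p by (simp add: c_def ln_less_zero)
  then have "0 < \<epsilon>" "0 < C'"
    using Suc.prems by (simp_all add: \<epsilon>_def C'_def)
  obtain K where K: "\<And>s n R. K \<le> s \<Longrightarrow> R \<subseteq> {1..n} \<Longrightarrow> card R = s \<Longrightarrow>
      measure_pmf.prob (Gnp n p) {G. \<not> has_clique G R v} \<le> exp (- C' * real s)"
    using Suc.IH[OF \<open>0 < C'\<close>] unfolding eventually_sequentially by blast
  have "\<forall>\<^sub>F k in sequentially. 2 \<le> k \<and> real K \<le> \<epsilon> * real k / 2 - 1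
      \<and> exp (- c * (real k - 1) * real k / 8) + exp (C' - 2 * C * real k) \<le> exp (- C * real k)"
    using \<open>0 < c\<close> \<open>0 < \<epsilon>\<close> Suc.prems
    by (intro eventually_conj eventually_ge_at_top; real_asymp)
  then show ?case
  proof (rule eventually_mono, intro allI impI)
    fix k n :: nat and S :: "nat set"
    assume k: "2 \<le> k \<and> real K \<le> \<epsilon> * real k / 2 - 1
      \<and> exp (- c * (real k - 1) * real k / 8) + exp (C' - 2 * C * real k) \<le> exp (- C * real k)"
      and S: "S \<subseteq> {1..n}" "card S = k"
    define s where "s = nat \<lfloor>\<epsilon> * real (k - k div 2)\<rfloor>"
    have "real k / 2 \<le> real (k - k div 2)"
      by linarith
    then have "\<epsilon> * (real k / 2) \<le> \<epsilon> * real (k - k div 2)"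
      using \<open>0 < \<epsilon>\<close> by (intro mult_left_mono) auto
    moreover have "\<epsilon> * real (k - k div 2) - 1 \<le> real s"
      unfolding s_def by linarith
    ultimately have s_ge: "\<epsilon> * real k / 2 - 1 \<le> real s"
      by simp
    have "measure_pmf.prob (Gnp n p) {G. \<not> has_clique G S (Suc v)}
        \<le> exp (- c * (real k - 1) * real k / 8) + exp (- C' * real s)"
      using k s_ge by (intro prob_no_clique_Suc_le_exp[OF p S] K c_def) (auto simp: s_def \<epsilon>_def)
    also have "exp (- C' * real s) \<le> exp (C' - 2 * C * real k)"
    proof -
      have "C' * (\<epsilon> * real k / 2 - 1) \<le> C' * real s"
        using s_ge \<open>0 < C'\<close> by (intro mult_left_mono) auto
      moreover have "C' * (\<epsilon> * real k / 2 - 1) = 2 * C * real k - C'"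
        using \<open>0 < \<epsilon>\<close> by (simp add: C'_def field_simps)
      ultimately show ?thesis
        by simp
    qed
    finally show "measure_pmf.prob (Gnp n p) {G. \<not> has_clique G S (Suc v)} \<le> exp (- C * real k)"
      using k by linarith
  qed
qed

section \<open>Cliques in common neighbourhoods\<close>

lemma expectation_power_card_neighbours:
  assumes p: "0 \<le> p" "p \<le> 1" and "0 \<le> q" and x: "x \<in> {1..n}" and Y: "Y \<subseteq> {1..n}" "x \<notin> Y"
  shows "measure_pmf.expectation (Gnp n p) (\<lambda>G. q ^ card {y \<in> Y. adj G x y}) = (1 - p + p * q) ^ card Y"
proof -
  have "finite Y"
    using Y(1) by (rule finite_subset) simp
  then have "card {y \<in> Y. adj G x y} = card {e \<in> edges_between {x} Y. G e}" for G
    using Y(2) by (simp add: card_edges_between_present)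
  moreover have "edges_between {x} Y \<subseteq> edge_pairs n"
    using x Y by (intro edges_between_subset_edge_pairs) auto
  then have "measure_pmf.expectation (Gnp n p) (\<lambda>G. q ^ card {e \<in> edges_between {x} Y. G e})
      = (1 - p + p * q) ^ card (edges_between {x} Y)"
    unfolding Gnp_def by (rule expectation_power_card_Pi_bernoulli[OF finite_edge_pairs _ p \<open>0 \<le> q\<close>])
  ultimately show ?thesis
    using card_edges_between[of "{x}" Y] Y(2) by simp
qed

lemma prob_few_common_neighbours_le:
  assumes p: "0 \<le> p" "p \<le> 1" and x: "x1 \<in> {1..n}" "x2 \<in> {1..n}" "x1 \<noteq> x2"
    and Y: "Y \<subseteq> {1..n}" "x1 \<notin> Y" "x2 \<notin> Y"
  shows "measure_pmf.prob (Gnp n p) {G. card {y \<in> Y. adj G x1 y \<and> adj G x2 y} < k}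
           \<le> 2 ^ k * (1 - p\<^sup>2 / 2) ^ card Y"
proof -
  \<comment> \<open>condition on the edges at \<open>x1\<close>, then average the tail bound over the neighbourhood of \<open>x1\<close>\<close>
  define \<phi> where "\<phi> G = {y \<in> Y. adj G x1 y}" for G
  define F where "F R = {G. card {y \<in> R \<inter> Y. adj G x2 y} < k}" for R
  define \<psi> where "\<psi> R = 2 ^ k * (1 - p / 2) ^ card (R \<inter> Y)" for R
  have common: "{y \<in> \<phi> G \<inter> Y. adj G x2 y} = {y \<in> Y. adj G x1 y \<and> adj G x2 y}" for G
    by (auto simp: \<phi>_def)
  have "edges_between {x1} Y \<subseteq> edge_pairs n"
    using x Y by (intro edges_between_subset_edge_pairs) auto
  then have "measure_pmf.prob (Gnp n p) {G. G \<in> F (\<phi> G)}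
      \<le> measure_pmf.expectation (Gnp n p) (\<lambda>G. \<psi> (\<phi> G))"
    unfolding Gnp_def
  proof (rule prob_Pi_pmf_le_expectation[where \<phi> = \<phi> and F = F and \<psi> = \<psi>, OF finite_edge_pairs])
    fix G G' :: "nat \<times> nat \<Rightarrow> bool"
    assume same: "\<And>e. e \<in> edges_between {x1} Y \<Longrightarrow> G e = G' e"
    then show "\<phi> G = \<phi> G'"
      by (auto simp: \<phi>_def adj_iff_edge same edge_in_edges_between)
  next
    fix R and G G' :: "nat \<times> nat \<Rightarrow> bool"
    assume same: "\<And>e. e \<in> edge_pairs n - edges_between {x1} Y \<Longrightarrow> G e = G' e"
    have "G (edge x2 y) = G' (edge x2 y)" if "y \<in> Y" for y
      using that x Y by (intro same DiffI edge_in_edge_pairs edge_notin_edges_between) auto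
    then have "{y \<in> R \<inter> Y. adj G x2 y} = {y \<in> R \<inter> Y. adj G' x2 y}"
      by (auto simp: adj_iff_edge)
    then show "G \<in> F R \<longleftrightarrow> G' \<in> F R"
      unfolding F_def by simp
  next
    fix R
    have "measure_pmf.prob (Gnp n p) {G. (\<Sum>a\<in>{x2}. card {b \<in> R \<inter> Y. adj G a b}) < k}
        \<le> 2 ^ k * (1 - p / 2) ^ (card {x2} * card (R \<inter> Y))"
      using x Y by (intro prob_few_edges_between_le[OF p]) auto
    then show "measure_pmf.prob (Pi_pmf (edge_pairs n) False (\<lambda>_. bernoulli_pmf p)) (F R) \<le> \<psi> R"
      by (simp add: F_def \<psi>_def Gnp_def)
  qed simp
  also have "measure_pmf.expectation (Gnp n p) (\<lambda>G. \<psi> (\<phi> G))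
      = 2 ^ k * measure_pmf.expectation (Gnp n p) (\<lambda>G. (1 - p / 2) ^ card {y \<in> Y. adj G x1 y})"
    by (simp add: \<psi>_def \<phi>_def Int_absorb2)
  also have "\<dots> = 2 ^ k * (1 - p\<^sup>2 / 2) ^ card Y"
    using expectation_power_card_neighbours[OF p _ x(1) Y(1,2), of "1 - p / 2"] p
    by (simp add: power2_eq_square algebra_simps)
  finally show ?thesis
    unfolding F_def mem_Collect_eq common .
qed

lemma prob_no_clique_in_common_nbhd_le:
  assumes p: "0 \<le> p" "p \<le> 1" and x: "x1 \<in> {1..n}" "x2 \<in> {1..n}" "x1 \<noteq> x2" and "m \<le> n"
    and no_clique: "\<And>R. R \<subseteq> {1..n} \<Longrightarrow> card R = k \<Longrightarrow>
                      measure_pmf.prob (Gnp n p) {G. \<not> has_clique G R v} \<le> \<beta>"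
    and "0 \<le> \<beta>"
  shows "measure_pmf.prob (Gnp n p) {G. \<not> has_clique G (common_nbhd G {1..m} x1 x2) v}
           \<le> 2 ^ k * (1 - p\<^sup>2 / 2) ^ (m - 2) + \<beta>"
proof -
  define Y where "Y = {1..m} - {x1, x2}"
  define N where "N G = {y \<in> Y. adj G x1 y \<and> adj G x2 y}" for G
  have Y: "Y \<subseteq> {1..n}" "x1 \<notin> Y" "x2 \<notin> Y"
    using \<open>m \<le> n\<close> by (auto simp: Y_def)
  have "common_nbhd G {1..m} x1 x2 = N G" for G
    by (auto simp: common_nbhd_def N_def Y_def adj_iff_edge)
  then have "measure_pmf.prob (Gnp n p) {G. \<not> has_clique G (common_nbhd G {1..m} x1 x2) v}
      \<le> measure_pmf.prob (Gnp n p) ({G. card (N G) < k} \<union> {G. k \<le> card (N G) \<and> \<not> has_clique G (N G) v})"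
    by (intro measure_pmf.finite_measure_mono) auto
  also have "\<dots> \<le> measure_pmf.prob (Gnp n p) {G. card (N G) < k}
      + measure_pmf.prob (Gnp n p) {G. k \<le> card (N G) \<and> \<not> has_clique G (N G) v}"
    by (rule measure_Un_le) simp_all
  also have "\<dots> \<le> 2 ^ k * (1 - p\<^sup>2 / 2) ^ (m - 2) + \<beta>"
  proof (rule add_mono)
    have "measure_pmf.prob (Gnp n p) {G. card (N G) < k} \<le> 2 ^ k * (1 - p\<^sup>2 / 2) ^ card Y"
      unfolding N_def by (rule prob_few_common_neighbours_le[OF p x Y])
    also have "\<dots> \<le> 2 ^ k * (1 - p\<^sup>2 / 2) ^ (m - 2)"
    proof (intro mult_left_mono power_decreasing)
      show "m - 2 \<le> card Y"
        using diff_card_le_card_Diff[of "{x1, x2}" "{1..m}"] card_insert_le_m1[of 2 "{x2}" x1]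
        by (simp add: Y_def)
      show "0 \<le> 1 - p\<^sup>2 / 2" "1 - p\<^sup>2 / 2 \<le> 1"
        using p power_le_one[of p 2] by auto
    qed simp
    finally show "measure_pmf.prob (Gnp n p) {G. card (N G) < k} \<le> 2 ^ k * (1 - p\<^sup>2 / 2) ^ (m - 2)" .
    show "measure_pmf.prob (Gnp n p) {G. k \<le> card (N G) \<and> \<not> has_clique G (N G) v} \<le> \<beta>"
    proof (rule prob_large_set_without_clique_le[where A = "{x1, x2}", OF _ Y(1) _ _ _ no_clique \<open>0 \<le> \<beta>\<close>])
      fix G G' :: "nat \<times> nat \<Rightarrow> bool"
      assume same: "\<And>e. e \<in> edges_between {x1, x2} Y \<Longrightarrow> G e = G' e"
      then show "N G = N G'"
        by (auto simp: N_def adj_iff_edge same edge_in_edges_between)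
    qed (use x Y in \<open>auto simp: N_def\<close>)
  qed
  finally show ?thesis .
qed

section \<open>The union bound\<close>

lemma prob_some_pair_without_clique_le:
  assumes p: "0 \<le> p" "p \<le> 1" and "m \<le> n"
    and no_clique: "\<And>R. R \<subseteq> {1..n} \<Longrightarrow> card R = k \<Longrightarrow>
                      measure_pmf.prob (Gnp n p) {G. \<not> has_clique G R v} \<le> \<beta>"
    and "0 \<le> \<beta>"
  shows "measure_pmf.prob (Gnp n p)
           {G. \<exists>x1\<in>{1..n}. \<exists>x2\<in>{1..n}. x1 \<noteq> x2 \<and> \<not> has_clique G (common_nbhd G {1..m} x1 x2) v}
         \<le> real n ^ 2 * (2 ^ k * (1 - p\<^sup>2 / 2) ^ (m - 2) + \<beta>)"
proof -
  define P where "P = {q \<in> {1..n} \<times> {1..n}. fst q \<noteq> snd q}"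
  define Bad where "Bad q = {G. \<not> has_clique G (common_nbhd G {1..m} (fst q) (snd q)) v}" for q
  define B where "B = 2 ^ k * (1 - p\<^sup>2 / 2) ^ (m - 2) + \<beta>"
  have "P \<subseteq> {1..n} \<times> {1..n}"
    by (auto simp: P_def)
  then have "finite P" "card P \<le> n ^ 2"
    using card_mono[of "{1..n} \<times> {1..n}" P] by (auto simp: power2_eq_square intro: finite_subset)
  have "{G. \<exists>x1\<in>{1..n}. \<exists>x2\<in>{1..n}. x1 \<noteq> x2 \<and> \<not> has_clique G (common_nbhd G {1..m} x1 x2) v}
      = (\<Union>q\<in>P. Bad q)"
    by (auto simp: P_def Bad_def) (meson atLeastAtMost_iff)
  also have "measure_pmf.prob (Gnp n p) \<dots> \<le> (\<Sum>q\<in>P. measure_pmf.prob (Gnp n p) (Bad q))"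
    using \<open>finite P\<close> by (intro measure_pmf.finite_measure_subadditive_finite) auto
  also have "\<dots> \<le> (\<Sum>q\<in>P. B)"
    unfolding B_def Bad_def
    by (intro sum_mono prob_no_clique_in_common_nbhd_le[OF p _ _ _ \<open>m \<le> n\<close> no_clique \<open>0 \<le> \<beta>\<close>])
      (auto simp: P_def)
  also have "\<dots> \<le> real n ^ 2 * B"
    using \<open>card P \<le> n ^ 2\<close> p \<open>0 \<le> \<beta>\<close> power_le_one[of p 2]
    by (auto simp: B_def intro!: mult_right_mono simp flip: of_nat_power)
  finally show ?thesis
    unfolding B_def .
qed

lemma exp_diff_mult_ln: "0 < x \<Longrightarrow> exp (a - real j * ln x) = exp a / x ^ j"
  by (simp add: exp_diff exp_of_nat_mult)

lemma two_power_floor_half_ln_le_sqrt: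
  assumes "1 \<le> n"
  shows "(2::real) ^ nat \<lfloor>ln (real n) / 2\<rfloor> \<le> sqrt (real n)"
proof -
  have n: "0 < real n" "0 \<le> ln (real n)"
    using assms by auto
  have "(2::real) ^ nat \<lfloor>ln (real n) / 2\<rfloor> \<le> exp 1 ^ nat \<lfloor>ln (real n) / 2\<rfloor>"
    using exp_ge_add_one_self[of 1] by (intro power_mono) auto
  also have "\<dots> \<le> exp (ln (real n) / 2)"
    using n by (simp flip: exp_of_nat_mult) linarith
  also have "\<dots> = sqrt (real n)"
    using n by (simp add: powr_def flip: powr_half_sqrt)
  finally show ?thesis .
qed

lemma exp_floor_half_ln_le:
  assumes "1 \<le> n"
  shows "exp (- 6 * real (nat \<lfloor>ln (real n) / 2\<rfloor>)) \<le> exp 6 / real n ^ 3"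
proof -
  have "exp (- 6 * real (nat \<lfloor>ln (real n) / 2\<rfloor>)) \<le> exp (6 - real 3 * ln (real n))"
    using assms by simp linarith
  also have "\<dots> = exp 6 / real n ^ 3"
    using assms by (intro exp_diff_mult_ln) simp
  finally show ?thesis .
qed

lemma power_floor_ln_le:
  assumes p: "0 < p" "p \<le> 1" and "1 \<le> n"
  shows "(1 - p\<^sup>2 / 2) ^ (nat \<lfloor>6 / p\<^sup>2 * ln (real n)\<rfloor> - 2) \<le> exp (3 * p\<^sup>2 / 2) / real n ^ 3"
proof -
  define m where "m = nat \<lfloor>6 / p\<^sup>2 * ln (real n)\<rfloor> - 2"
  have "(1 - p\<^sup>2 / 2) ^ m \<le> exp (- (p\<^sup>2 / 2)) ^ m"
    using p power_le_one[of p 2] exp_ge_add_one_self[of "- (p\<^sup>2 / 2)"] by (intro power_mono) auto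
  also have "\<dots> = exp (real m * (- (p\<^sup>2 / 2)))"
    by (simp flip: exp_of_nat_mult)
  also have "\<dots> \<le> exp (3 * p\<^sup>2 / 2 - real 3 * ln (real n))"
  proof -
    have "6 / p\<^sup>2 * ln (real n) - 3 \<le> real m"
      unfolding m_def by linarith
    then have "p\<^sup>2 / 2 * (6 / p\<^sup>2 * ln (real n) - 3) \<le> p\<^sup>2 / 2 * real m"
      by (rule mult_left_mono) simp
    moreover have "p\<^sup>2 / 2 * (6 / p\<^sup>2 * ln (real n) - 3) = 3 * ln (real n) - 3 * p\<^sup>2 / 2"
      using p by (simp add: field_simps)
    ultimately show ?thesis
      by (simp add: algebra_simps)
  qed
  also have "\<dots> = exp (3 * p\<^sup>2 / 2) / real n ^ 3"
    using assms(3) by (intro exp_diff_mult_ln) simp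
  finally show ?thesis
    unfolding m_def .
qed

lemma failure_bound_tendsto_zero:
  assumes p: "0 < p" "p \<le> 1"
  shows "(\<lambda>n. real n ^ 2 * (2 ^ nat \<lfloor>ln (real n) / 2\<rfloor> * (1 - p\<^sup>2 / 2) ^ (nat \<lfloor>6 / p\<^sup>2 * ln (real n)\<rfloor> - 2)
                          + exp (- 6 * real (nat \<lfloor>ln (real n) / 2\<rfloor>)))) \<longlonglongrightarrow> 0"
    (is "?f \<longlonglongrightarrow> 0")
proof -
  define U where "U n = exp (3 * p\<^sup>2 / 2) * (sqrt (real n) / real n) + exp 6 / real n" for n :: nat
  have q: "0 \<le> 1 - p\<^sup>2 / 2"
    using p power_le_one[of p 2] by auto
  have bound: "?f n \<le> U n" if "1 \<le> n" for n
  proof -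
    have "?f n \<le> real n ^ 2 * (sqrt (real n) * (exp (3 * p\<^sup>2 / 2) / real n ^ 3) + exp 6 / real n ^ 3)"
      using two_power_floor_half_ln_le_sqrt[OF that] power_floor_ln_le[OF p that]
        exp_floor_half_ln_le[OF that] q
      by (intro mult_left_mono add_mono mult_mono) auto
    also have "\<dots> = U n"
      using that by (simp add: U_def field_simps power2_eq_square power3_eq_cube)
    finally show ?thesis .
  qed
  have upper: "\<forall>\<^sub>F n in sequentially. ?f n \<le> U n"
    using eventually_ge_at_top[of 1] by (rule eventually_mono) (rule bound)
  have lower: "\<forall>\<^sub>F n in sequentially. 0 \<le> ?f n"
    using q by (intro always_eventually allI) simp
  have lim: "U \<longlonglongrightarrow> 0"
    unfolding U_def by real_asymp
  show ?thesis
    by (rule tendsto_sandwich[OF lower upper tendsto_const lim])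
qed

lemma prob_some_pair_without_clique_tendsto_zero:
  assumes p: "0 < p" "p \<le> 1"
  shows "(\<lambda>n. measure_pmf.prob (Gnp n p)
            {G. \<exists>x1\<in>{1..n}. \<exists>x2\<in>{1..n}. x1 \<noteq> x2
                \<and> \<not> has_clique G (common_nbhd G {1..nat \<lfloor>6 / p\<^sup>2 * ln (real n)\<rfloor>} x1 x2) v})
         \<longlonglongrightarrow> 0"
proof -
  define k m where "k n = nat \<lfloor>ln (real n) / 2\<rfloor>" and "m n = nat \<lfloor>6 / p\<^sup>2 * ln (real n)\<rfloor>" for n :: nat
  have "\<forall>\<^sub>F s in sequentially. \<forall>n S. S \<subseteq> {1..n} \<longrightarrow> card S = s \<longrightarrow>
      measure_pmf.prob (Gnp n p) {G. \<not> has_clique G S v} \<le> exp (- 6 * real s)"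
    using p by (rule eventually_prob_no_clique_le) simp
  then obtain K where K: "\<And>s n S. K \<le> s \<Longrightarrow> S \<subseteq> {1..n} \<Longrightarrow> card S = s \<Longrightarrow>
      measure_pmf.prob (Gnp n p) {G. \<not> has_clique G S v} \<le> exp (- 6 * real s)"
    unfolding eventually_sequentially by blast
  have "\<forall>\<^sub>F n in sequentially. real K \<le> ln (real n) / 2 \<and> 6 / p\<^sup>2 * ln (real n) \<le> real n"
    using p by (intro eventually_conj; real_asymp)
  then have "\<forall>\<^sub>F n in sequentially. measure_pmf.prob (Gnp n p)
      {G. \<exists>x1\<in>{1..n}. \<exists>x2\<in>{1..n}. x1 \<noteq> x2 \<and> \<not> has_clique G (common_nbhd G {1..m n} x1 x2) v}
      \<le> real n ^ 2 * (2 ^ k n * (1 - p\<^sup>2 / 2) ^ (m n - 2) + exp (- 6 * real (k n)))"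
  proof (rule eventually_mono)
    fix n assume "real K \<le> ln (real n) / 2 \<and> 6 / p\<^sup>2 * ln (real n) \<le> real n"
    then have "K \<le> k n" "m n \<le> n"
      unfolding k_def m_def by linarith+
    then show "measure_pmf.prob (Gnp n p)
        {G. \<exists>x1\<in>{1..n}. \<exists>x2\<in>{1..n}. x1 \<noteq> x2 \<and> \<not> has_clique G (common_nbhd G {1..m n} x1 x2) v}
        \<le> real n ^ 2 * (2 ^ k n * (1 - p\<^sup>2 / 2) ^ (m n - 2) + exp (- 6 * real (k n)))"
      using p by (intro prob_some_pair_without_clique_le K) auto
  qed
  then show ?thesis
    using failure_bound_tendsto_zero[OF p]
    by (intro tendsto_sandwich[OF always_eventually[OF allI[OF measure_nonneg]]] tendsto_const)
      (simp_all add: k_def m_def)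
qed

theorem lemma6:
  fixes p :: real and v :: nat
  assumes "0 < p" and "p < 1" and "v \<ge> 3"
  shows "(\<lambda>n. measure_pmf.prob (Gnp n p)
            {G. \<forall>x1\<in>{1..n}. \<forall>x2\<in>{1..n}. x1 \<noteq> x2 \<longrightarrow>
                 (\<exists>K. K \<subseteq> common_nbhd G {1..nat \<lfloor>6 / p\<^sup>2 * ln (real n)\<rfloor>} x1 x2
                      \<and> card K = v \<and> is_clique G K)})
         \<longlonglongrightarrow> 1"
    (is "(\<lambda>n. measure_pmf.prob (Gnp n p) (?Good n)) \<longlonglongrightarrow> 1")
proof -
  define Bad where "Bad n = {G. \<exists>x1\<in>{1..n}. \<exists>x2\<in>{1..n}. x1 \<noteq> x2
      \<and> \<not> has_clique G (common_nbhd G {1..nat \<lfloor>6 / p\<^sup>2 * ln (real n)\<rfloor>} x1 x2) v}" for n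
  have "(\<lambda>n. 1 - measure_pmf.prob (Gnp n p) (Bad n)) \<longlonglongrightarrow> 1 - 0"
    using assms unfolding Bad_def
    by (intro tendsto_diff tendsto_const prob_some_pair_without_clique_tendsto_zero) auto
  moreover have "1 - measure_pmf.prob (Gnp n p) (Bad n) = measure_pmf.prob (Gnp n p) (?Good n)" for n
  proof -
    have "?Good n = - Bad n"
      unfolding Bad_def has_clique_def by blast
    then show ?thesis
      by (simp add: measure_pmf.prob_compl[symmetric] Compl_eq_Diff_UNIV)
  qed
  ultimately show ?thesis
    by simp
qed

end
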